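(* Let $H=\langle a,b \mid c=[b,a],\ [c,a]=[c,b]=1\rangle$. Let $f\colon H\to\mathbb{R}$ be a pseudo-Jensen function with $f(a)=f(b)=f(c)=0$. Then $f\equiv 0$.
   Context: $[x,y]=x^{-1}y^{-1}xy$. In $H$ every element is uniquely of the form $a^mb^nc^k$ with $m,n,k\in\mathbb{Z}$ ($H\cong UT(3,\mathbb{Z})$). A function $f\colon H\to\mathbb{R}$ is pseudo-Jensen if there is $\delta>0$ with $|f(xy)+f(xy^{-1})-2f(x)|\le\delta$ for all $x,y\in H$ and $f(x^n)=nf(x)$ for all $x\in H$, $n\in\mathbb{Z}$. *)

theory Defs
  imports Complex_Main
begin

text \<open>The discrete Heisenberg group H, elements written uniquely as a^m b^n c^k,
  encoded as the triple (m, n, k). With c = [b,a] = b^-1 a^-1 b a central we have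
  b a = a b c, hence b^n a^m' = a^m' b^n c^(n m'), giving the product below.\<close>

type_synonym heis = "int \<times> int \<times> int"

definition hmul :: "heis \<Rightarrow> heis \<Rightarrow> heis" where
  "hmul x y = (case x of (m, n, k) \<Rightarrow> case y of (m', n', k') \<Rightarrow>
      (m + m', n + n', k + k' + n * m'))"

definition hone :: heis where "hone = (0, 0, 0)"

definition hinv :: "heis \<Rightarrow> heis" where
  "hinv x = (case x of (m, n, k) \<Rightarrow> (- m, - n, - k + n * m))"

definition hpow :: "heis \<Rightarrow> int \<Rightarrow> heis" where
  "hpow x z = (if 0 \<le> z then (hmul x ^^ nat z) hone else (hmul (hinv x) ^^ nat (- z)) hone)"

definition hcomm :: "heis \<Rightarrow> heis \<Rightarrow> heis" where
  "hcomm x y = hmul (hmul (hmul (hinv x) (hinv y)) x) y"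

definition ha :: heis where "ha = (1, 0, 0)"
definition hb :: heis where "hb = (0, 1, 0)"
definition hc :: heis where "hc = hcomm hb ha"

definition pseudo_jensen :: "(heis \<Rightarrow> real) \<Rightarrow> bool" where
  "pseudo_jensen f \<longleftrightarrow>
     (\<exists>\<delta>>0. \<forall>x y. \<bar>f (hmul x y) + f (hmul x (hinv y)) - 2 * f x\<bar> \<le> \<delta>) \<and>
     (\<forall>x n. f (hpow x n) = real_of_int n * f x)"

lemma hc_eq: "hc = (0, 0, 1)"
  by (simp add: hc_def hcomm_def hmul_def hinv_def ha_def hb_def)

end

theory Submission
  imports Defs
begin

text \<open>Taking y central
  in the Jensen inequality, and using that f vanishes on the centre, shows that f changes by at
  most \<delta>/2 along each coset of the centre. Taking x and y in the cyclic subgroups generated by a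
  and by b shows f(a^m b^n) \<approx> -f(a^m b^-n) and f(a^m b^n c^nm) \<approx> f(a^m b^-n), where \<approx> means up
  to \<delta>. Together these bound f on all of H, and a bounded homogeneous function vanishes.\<close>

lemma hmul_iterate_commuting:
  assumes "p * q = 0"
  shows "(hmul (p, q, r) ^^ n) hone = (int n * p, int n * q, int n * r)"
proof (induction n)
  case 0
  then show ?case by (simp add: hone_def)
next
  case (Suc n)
  have "q * (int n * p) = 0"
    using assms by auto
  with Suc show ?case by (simp add: hmul_def algebra_simps)
qed

lemma hpow_commuting:
  assumes "p * q = 0"
  shows "hpow (p, q, r) z = (z * p, z * q, z * r)"
proof (cases "0 \<le> z")
  case True
  then show ?thesis
    using hmul_iterate_commuting[OF assms] by (simp add: hpow_def)
next
  case False
  have "hinv (p, q, r) = (- p, - q, - r)"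
    using assms by (simp add: hinv_def mult.commute)
  with False show ?thesis
    using assms hmul_iterate_commuting[where p="- p" and q="- q" and r="- r" and n="nat (- z)"] by (simp add: hpow_def)
qed

lemma hpow_two: "hpow (m, n, k) 2 = (2 * m, 2 * n, 2 * k + n * m)"
  by (simp add: hpow_def numeral_2_eq_2 hmul_def hone_def)

lemma hpow_minus_one: "hpow x (- 1) = hinv x"
  by (cases x) (simp add: hpow_def hmul_def hone_def hinv_def)

locale heis_quasi_jensen =
  fixes f :: "heis \<Rightarrow> real" and \<delta> :: real
  assumes jensen_defect: "\<bar>f (hmul x y) + f (hmul x (hinv y)) - 2 * f x\<bar> \<le> \<delta>"
    and homogeneous: "f (hpow x z) = real_of_int z * f x"
begin

lemma f_hinv: "f (hinv x) = - f x"
  using homogeneous[of x "- 1"] by (simp add: hpow_minus_one)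

lemma commuting_coordinates:
  assumes "p * q = 0"
  shows "f (z * p, z * q, z * r) = real_of_int z * f (p, q, r)"
  using homogeneous[of "(p, q, r)" z] by (simp add: hpow_commuting[OF assms])

lemma zero_if_bounded:
  assumes bounded: "\<And>y. \<bar>f y\<bar> \<le> B"
  shows "f x = 0"
proof (rule ccontr)
  assume "f x \<noteq> 0"
  obtain N :: nat where N: "B / \<bar>f x\<bar> < real N"
    using reals_Archimedean2 by blast
  have "B < real N * \<bar>f x\<bar>"
    using N \<open>f x \<noteq> 0\<close> by (simp add: field_simps)
  also have "\<dots> = \<bar>f (hpow x (int N))\<bar>"
    by (simp add: homogeneous abs_mult)
  also have "\<dots> \<le> B"
    by (rule bounded)
  finally show False by simp
qed

lemma vanishes_on_centre:
  assumes "f hc = 0"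
  shows "f (0, 0, k) = 0"
  using assms commuting_coordinates[where p=0 and q=0 and r=1 and z=k] by (simp add: hc_eq)

lemma central_shift:
  assumes "f hc = 0"
  shows "\<bar>f (m, n, k) - f (m, n, k')\<bar> \<le> \<delta> / 2"
proof -
  \<comment> \<open>x = (m,n,k'), y = (m,n,2k-k') give xy = (m,n,k)^2 and xy^-1 central.\<close>
  have "hmul (m, n, k') (m, n, 2 * k - k') = hpow (m, n, k) 2"
    by (simp add: hpow_two hmul_def)
  moreover have "hmul (m, n, k') (hinv (m, n, 2 * k - k')) = (0, 0, 2 * k' - 2 * k)"
    by (simp add: hmul_def hinv_def)
  ultimately have "\<bar>2 * f (m, n, k) - 2 * f (m, n, k')\<bar> \<le> \<delta>"
    using jensen_defect[of "(m, n, k')" "(m, n, 2 * k - k')"]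
    by (simp add: homogeneous vanishes_on_centre[OF assms])
  then show ?thesis by linarith
qed

lemma b_direction_odd:
  assumes "f ha = 0"
  shows "\<bar>f (m, n, 0) + f (m, - n, 0)\<bar> \<le> \<delta>"
proof -
  have "f (m, 0, 0) = 0"
    using assms commuting_coordinates[where p=1 and q=0 and r=0 and z=m] by (simp add: ha_def)
  then show ?thesis
    using jensen_defect[of "(m, 0, 0)" "(0, n, 0)"] by (simp add: hmul_def hinv_def)
qed

lemma commutator_shift:
  assumes "f hb = 0"
  shows "\<bar>f (m, n, n * m) - f (m, - n, 0)\<bar> \<le> \<delta>"
proof -
  have "f (0, n, 0) = 0"
    using assms commuting_coordinates[where p=0 and q=1 and r=0 and z=n] by (simp add: hb_def)
  moreover have "hmul (0, n, 0) (hinv (m, 0, 0)) = hinv (m, - n, 0)"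
    by (simp add: hmul_def hinv_def)
  ultimately show ?thesis
    using jensen_defect[of "(0, n, 0)" "(m, 0, 0)"] by (simp add: hmul_def f_hinv)
qed

lemma bounded:
  assumes "f ha = 0" and "f hb = 0" and "f hc = 0"
  shows "\<bar>f x\<bar> \<le> 2 * \<delta>"
proof -
  obtain m n k where x: "x = (m, n, k)"
    by (cases x) auto
  have "\<bar>f (m, n, 0)\<bar> \<le> 5 / 4 * \<delta>"
    using central_shift[OF assms(3), of m n "n * m" 0] b_direction_odd[OF assms(1), of m n]
      commutator_shift[OF assms(2), of m n]
    by linarith
  then show ?thesis
    using central_shift[OF assms(3), of m n k 0] unfolding x by linarith
qed

end

theorem lemma3p8:
  fixes f :: "heis \<Rightarrow> real"
  assumes "pseudo_jensen f"
    and "f ha = 0" and "f hb = 0" and "f hc = 0"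
  shows "\<forall>x. f x = 0"
proof -
  obtain \<delta> where "heis_quasi_jensen f \<delta>"
    using assms(1) unfolding pseudo_jensen_def heis_quasi_jensen_def by blast
  then interpret heis_quasi_jensen f \<delta> .
  show ?thesis
    using zero_if_bounded bounded[OF assms(2-4)] by blast
qed

end
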